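(* Let $K$ be a field, $G=\mathbb Z$, $\widehat G=2\mathbb Z$. If $t\in\mathbb Z$ is even, every $2\mathbb Z$-periodic Leibniz algebra $L(f,t)$ is isomorphic to one of $L_{\bar 0 1}(\alpha,t)$ ($\alpha\in\{0,1\}$), $L_{\bar 0 2}(t)$, $L_{\bar 0 3}(t)$. If $t$ is odd, every $2\mathbb Z$-periodic Leibniz algebra $L(f,t)$ is isomorphic to one of $L_{\bar 1 1}(\alpha,t)$ ($\alpha\in\{0,1\}$), $L_{\bar 1 2}(t)$, $L_{\bar 1 3}(t)$.
   Context: For $t\in\mathbb Z$ and $f:\mathbb Z\times\mathbb Z\to K$, $L(f,t)$ is the $K$-algebra with basis $\{e_a:a\in\mathbb Z\}$ and multiplication $e_ae_b=f(a,b)e_{a+b+t}$; it is $2\mathbb Z$-periodic if $f(a,b)$ depends only on the parities of $a$ and $b$, and a Leibniz algebra if $x(yz)=(xy)z-(xz)y$ for all $x,y,z$. The following algebras are of the form $L(f,t)$ with $f$ given by: $L_{\bar 0 1}(\alpha,t)$: $f(a,b)=\alpha$ if $a$ odd and $b$ even, $0$ otherwise (i.e. $e_{2k-1}e_{2m}=\alpha e_{2(k+m)-1+t}$); $L_{\bar 0 2}(t)$ and $L_{\bar 1 2}(t)$: $f(a,b)=-1$ if $a$ even and $b$ odd, $f(a,b)=1$ if $a$ odd and $b$ even, $0$ otherwise; $L_{\bar 0 3}(t)$: $f(a,b)=1$ if $a,b$ both odd, $0$ otherwise; $L_{\bar 1 1}(\alpha,t)$: $f(a,b)=\alpha$ if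 $a$ even and $b$ odd, $0$ otherwise; $L_{\bar 1 3}(t)$: $f(a,b)=1$ if $a,b$ both even, $0$ otherwise. *)

theory Defs
  imports Main
begin

text \<open>Elements of L(f,t): finitely supported K-valued functions on the index set Z,
  i.e. finite linear combinations of the basis vectors e_a.\<close>
definition fsupp :: "(int \<Rightarrow> 'k::zero) set" where
  "fsupp = {x. finite {a. x a \<noteq> 0}}"

text \<open>Bilinear extension of e_a e_b = f(a,b) e_(a+b+t).\<close>
definition Lmult :: "(int \<Rightarrow> int \<Rightarrow> 'k::comm_ring_1) \<Rightarrow> int \<Rightarrow> (int \<Rightarrow> 'k) \<Rightarrow> (int \<Rightarrow> 'k) \<Rightarrow> (int \<Rightarrow> 'k)" where
  "Lmult f t x y = (\<lambda>c. \<Sum>a\<in>{a. x a \<noteq> 0}. f a (c - a - t) * x a * y (c - a - t))"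

definition is_leibniz :: "(int \<Rightarrow> int \<Rightarrow> 'k::comm_ring_1) \<Rightarrow> int \<Rightarrow> bool" where
  "is_leibniz f t = (\<forall>x\<in>fsupp. \<forall>y\<in>fsupp. \<forall>z\<in>fsupp.
     Lmult f t x (Lmult f t y z) = (\<lambda>c. Lmult f t (Lmult f t x y) z c - Lmult f t (Lmult f t x z) y c))"

definition periodic2 :: "(int \<Rightarrow> int \<Rightarrow> 'k) \<Rightarrow> bool" where
  "periodic2 f = (\<forall>a b a' b'. even (a - a') \<longrightarrow> even (b - b') \<longrightarrow> f a b = f a' b')"

definition alg_iso :: "(int \<Rightarrow> int \<Rightarrow> 'k::comm_ring_1) \<Rightarrow> int \<Rightarrow> (int \<Rightarrow> int \<Rightarrow> 'k) \<Rightarrow> int \<Rightarrow> bool" where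
  "alg_iso f t g s = (\<exists>\<phi>. bij_betw \<phi> fsupp fsupp
     \<and> (\<forall>x\<in>fsupp. \<forall>y\<in>fsupp. \<phi> (\<lambda>a. x a + y a) = (\<lambda>a. \<phi> x a + \<phi> y a))
     \<and> (\<forall>c. \<forall>x\<in>fsupp. \<phi> (\<lambda>a. c * x a) = (\<lambda>a. c * \<phi> x a))
     \<and> (\<forall>x\<in>fsupp. \<forall>y\<in>fsupp. \<phi> (Lmult f t x y) = Lmult g s (\<phi> x) (\<phi> y)))"

definition fA1 :: "'k::comm_ring_1 \<Rightarrow> int \<Rightarrow> int \<Rightarrow> 'k" where
  "fA1 \<alpha> a b = (if odd a \<and> even b then \<alpha> else 0)"

definition fA2 :: "int \<Rightarrow> int \<Rightarrow> 'k::comm_ring_1" where   (* L_{0 2}(t) and L_{1 2}(t) *)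
  "fA2 a b = (if even a \<and> odd b then -1 else if odd a \<and> even b then 1 else 0)"

definition fA3 :: "int \<Rightarrow> int \<Rightarrow> 'k::comm_ring_1" where
  "fA3 a b = (if odd a \<and> odd b then 1 else 0)"

definition fB1 :: "'k::comm_ring_1 \<Rightarrow> int \<Rightarrow> int \<Rightarrow> 'k" where
  "fB1 \<alpha> a b = (if even a \<and> odd b then \<alpha> else 0)"

definition fB3 :: "int \<Rightarrow> int \<Rightarrow> 'k::comm_ring_1" where
  "fB3 a b = (if even a \<and> even b then 1 else 0)"

end

theory Submission
  imports Defs
begin

text \<open>
  A 2Z-periodic structure function is a parity table: it is fixed by the four
  values A = f(even,even), B = f(even,odd), C = f(odd,even), D = f(odd,odd).  Testing the
  Leibniz identity on basis vectors e_a, e_b, e_c gives polynomial relations between these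
  constants, whose shape depends only on the parity of t.  Solving them leaves, up to a
  nonzero rescaling, exactly the listed tables.  Each of those is realised by a diagonal
  change of basis e_a \<mapsto> s(a) e_a with s depending only on the parity of a.
\<close>

definition scaled_basis :: "int \<Rightarrow> 'k::comm_ring_1 \<Rightarrow> int \<Rightarrow> 'k" where
  "scaled_basis d k = (\<lambda>x. if x = d then k else 0)"

lemma scaled_basis_fsupp: "scaled_basis d k \<in> fsupp"
proof -
  have "{a. scaled_basis d k a \<noteq> 0} \<subseteq> {d}" by (auto simp: scaled_basis_def)
  then show ?thesis unfolding fsupp_def by (auto intro: finite_subset)
qed

lemma Lmult_scaled_basis:
  "Lmult f t (scaled_basis d k) y = (\<lambda>c. f d (c - d - t) * k * y (c - d - t))"
proof (cases "k = 0")
  case True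
  then show ?thesis by (simp add: Lmult_def scaled_basis_def)
next
  case False
  then have "{a. scaled_basis d k a \<noteq> 0} = {d}" by (auto simp: scaled_basis_def)
  then show ?thesis by (simp add: Lmult_def scaled_basis_def)
qed

lemma Lmult_scaled_basis_scaled_basis:
  "Lmult f t (scaled_basis d k) (scaled_basis e m) = scaled_basis (d + e + t) (f d e * k * m)"
  unfolding Lmult_scaled_basis by (rule ext) (auto simp: scaled_basis_def)

lemma leibniz_structure_constants:
  assumes "is_leibniz f t"
  shows "f b c * f a (b + c + t) = f a b * f (a + b + t) c - f a c * f (a + c + t) b"
proof -
  let ?m = "Lmult f t" and ?n = "a + b + c + 2 * t"
  let ?ea = "scaled_basis a 1" and ?eb = "scaled_basis b 1" and ?ec = "scaled_basis c 1"
  have "?m ?ea (?m ?eb ?ec) = (\<lambda>w. ?m (?m ?ea ?eb) ?ec w - ?m (?m ?ea ?ec) ?eb w)"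
    using assms scaled_basis_fsupp unfolding is_leibniz_def by blast
  then have "?m ?ea (?m ?eb ?ec) ?n = ?m (?m ?ea ?eb) ?ec ?n - ?m (?m ?ea ?ec) ?eb ?n"
    by (rule fun_cong)
  then show ?thesis
    unfolding Lmult_scaled_basis_scaled_basis by (simp add: scaled_basis_def algebra_simps)
qed

definition parity_table :: "'k \<Rightarrow> 'k \<Rightarrow> 'k \<Rightarrow> 'k \<Rightarrow> int \<Rightarrow> int \<Rightarrow> 'k" where
  "parity_table A B C D a b = (if even a then (if even b then A else B) else (if even b then C else D))"

lemma periodic2_parity_table:
  assumes "periodic2 f"
  shows "f = parity_table (f 0 0) (f 0 1) (f 1 0) (f 1 1)"
proof (intro ext)
  fix a b :: int
  have same: "f a b = f a' b'" if "even (a - a')" "even (b - b')" for a' b'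
    using assms that unfolding periodic2_def by blast
  show "f a b = parity_table (f 0 0) (f 0 1) (f 1 0) (f 1 1) a b"
    using same[of 0 0] same[of 0 1] same[of 1 0] same[of 1 1]
    by (cases "even a"; cases "even b") (simp_all add: parity_table_def)
qed

lemma scaling_bij:
  fixes s :: "int \<Rightarrow> 'k::field"
  assumes "\<forall>a. s a \<noteq> 0"
  shows "bij_betw (\<lambda>x a. s a * x a) fsupp fsupp"
proof (rule bij_betw_byWitness[where f' = "\<lambda>x a. x a / s a"])
  have "{a. s a * x a \<noteq> 0} = {a. x a \<noteq> 0}" "{a. x a / s a \<noteq> 0} = {a. x a \<noteq> 0}"
    for x :: "int \<Rightarrow> 'k"
    using assms by auto
  then show "(\<lambda>x a. s a * x a) ` fsupp \<subseteq> fsupp" "(\<lambda>x a. x a / s a) ` fsupp \<subseteq> fsupp"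
    by (auto simp: fsupp_def)
  show "\<forall>x\<in>fsupp. (\<lambda>a. s a * x a / s a) = x" "\<forall>x\<in>fsupp. (\<lambda>a. s a * (x a / s a)) = x"
    using assms by auto
qed

lemma scaling_Lmult:
  fixes s :: "int \<Rightarrow> 'k::field"
  assumes nz: "\<forall>a. s a \<noteq> 0"
    and compat: "\<forall>a b. s (a + b + t) * f a b = g a b * s a * s b"
  shows "(\<lambda>c. s c * Lmult f t x y c) = Lmult g t (\<lambda>a. s a * x a) (\<lambda>a. s a * y a)"
proof (rule ext)
  fix c
  have supp: "{a. s a * x a \<noteq> 0} = {a. x a \<noteq> 0}" using nz by auto
  have summand: "s c * (f a (c - a - t) * x a * y (c - a - t))
            = g a (c - a - t) * (s a * x a) * (s (c - a - t) * y (c - a - t))" for a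
    using compat[rule_format, of a "c - a - t"] by (simp add: algebra_simps)
  show "s c * Lmult f t x y c = Lmult g t (\<lambda>a. s a * x a) (\<lambda>a. s a * y a) c"
    unfolding Lmult_def supp sum_distrib_left summand ..
qed

lemma alg_iso_by_scaling:
  fixes s :: "int \<Rightarrow> 'k::field"
  assumes "\<forall>a. s a \<noteq> 0"
    and "\<forall>a b. s (a + b + t) * f a b = g a b * s a * s b"
  shows "alg_iso f t g t"
  unfolding alg_iso_def
proof (intro exI[of _ "\<lambda>x a. s a * x a"] conjI ballI allI)
  show "bij_betw (\<lambda>x a. s a * x a) fsupp fsupp" using scaling_bij[OF assms(1)] .
  show "(\<lambda>a. s a * Lmult f t x y a) = Lmult g t (\<lambda>a. s a * x a) (\<lambda>a. s a * y a)" for x y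
    using scaling_Lmult[OF assms] .
qed (simp_all add: algebra_simps)

lemma alg_iso_by_parity_scaling:
  fixes u v :: "'k::field"
  assumes "u \<noteq> 0" "v \<noteq> 0"
    and "\<And>a b. (if even (a + b + t) then u else v) * f a b
               = g a b * (if even a then u else v) * (if even b then u else v)"
  shows "alg_iso f t g t"
  using assms by (intro alg_iso_by_scaling[where s = "\<lambda>a. if even a then u else v"]) auto

text \<open>For even t the Leibniz relations force A = 0, D C = 0, B D = C D and B (B + C) = 0;
  the four solution families rescale to L_01(0), L_01(1), L_02 and L_03.\<close>
lemma classify_even_t:
  fixes A B C D :: "'k::field"
  assumes L: "is_leibniz (parity_table A B C D) t" and t: "even t"
  shows "(\<exists>\<alpha>\<in>{0,1}. alg_iso (parity_table A B C D) t (fA1 \<alpha>) t)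
       \<or> alg_iso (parity_table A B C D) t fA2 t \<or> alg_iso (parity_table A B C D) t fA3 t"
proof -
  note rel = leibniz_structure_constants[OF L]
  have AA: "A * A = 0" using rel[where a=0 and b=0 and c=0] t by (simp add: parity_table_def)
  have DC: "D * C = 0" using rel[where a=1 and b=1 and c=1] t by (simp add: parity_table_def)
  have BD: "B * D = C * D - D * A" using rel[where a=1 and b=0 and c=1] t by (simp add: parity_table_def)
  have BB: "B * B = A * B - B * C" using rel[where a=0 and b=0 and c=1] t by (simp add: parity_table_def)
  have A0: "A = 0" using AA by simp
  have BC: "B * (B + C) = 0" using BB A0 by (simp add: algebra_simps)
  note iso = alg_iso_by_parity_scaling[where t = t and f = "parity_table A B C D"]
  consider "D \<noteq> 0" "B = 0" "C = 0" | "D = 0" "B = 0" "C = 0" | "D = 0" "B = 0" "C \<noteq> 0"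
    | "D = 0" "B = - C" "C \<noteq> 0"
  proof (cases "D = 0")
    case False
    then show ?thesis using that(1) DC BD A0 by simp
  next
    case True
    then show ?thesis using that(2-4) BC by (cases "C = 0") (auto simp: eq_neg_iff_add_eq_0)
  qed
  then show ?thesis
  proof cases
    case 1
    have "alg_iso (parity_table A B C D) t fA3 t"
      by (rule iso[where u = "1 / D" and v = 1]) (use 1 A0 t in \<open>auto simp: parity_table_def fA3_def\<close>)
    then show ?thesis by blast
  next
    case 2
    have "alg_iso (parity_table A B C D) t (fA1 0) t"
      by (rule iso[where u = 1 and v = 1]) (use 2 A0 t in \<open>auto simp: parity_table_def fA1_def\<close>)
    then show ?thesis by blast
  next
    case 3
    have "alg_iso (parity_table A B C D) t (fA1 1) t"
      by (rule iso[where u = C and v = 1]) (use 3 A0 t in \<open>auto simp: parity_table_def fA1_def\<close>)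
    then show ?thesis by blast
  next
    case 4
    have "alg_iso (parity_table A B C D) t fA2 t"
      by (rule iso[where u = C and v = 1]) (use 4 A0 t in \<open>auto simp: parity_table_def fA2_def\<close>)
    then show ?thesis by blast
  qed
qed

text \<open>For odd t the roles of the parity classes are exchanged: D = 0, A B = 0, C A = B A and
  C (C + B) = 0; the solutions rescale to L_11(0), L_11(1), L_12 and L_13.\<close>
lemma classify_odd_t:
  fixes A B C D :: "'k::field"
  assumes L: "is_leibniz (parity_table A B C D) t" and t: "odd t"
  shows "(\<exists>\<alpha>\<in>{0,1}. alg_iso (parity_table A B C D) t (fB1 \<alpha>) t)
       \<or> alg_iso (parity_table A B C D) t fA2 t \<or> alg_iso (parity_table A B C D) t fB3 t"
proof -
  note rel = leibniz_structure_constants[OF L]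
  have DD: "D * D = 0" using rel[where a=1 and b=1 and c=1] t by (simp add: parity_table_def)
  have AB: "A * B = 0" using rel[where a=0 and b=0 and c=0] t by (simp add: parity_table_def)
  have CA: "C * A = B * A - A * D" using rel[where a=0 and b=1 and c=0] t by (simp add: parity_table_def)
  have CC: "C * C = D * C - C * B" using rel[where a=1 and b=1 and c=0] t by (simp add: parity_table_def)
  have D0: "D = 0" using DD by simp
  have CB: "C * (C + B) = 0" using CC D0 by (simp add: algebra_simps)
  note iso = alg_iso_by_parity_scaling[where t = t and f = "parity_table A B C D"]
  consider "A \<noteq> 0" "B = 0" "C = 0" | "A = 0" "B = 0" "C = 0" | "A = 0" "B \<noteq> 0" "C = 0"
    | "A = 0" "B = - C" "C \<noteq> 0"
  proof (cases "A = 0")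
    case False
    then show ?thesis using that(1) AB CA D0 by simp
  next
    case True
    then show ?thesis using that(2-4) CB by (cases "C = 0") (auto simp: eq_neg_iff_add_eq_0 add.commute)
  qed
  then show ?thesis
  proof cases
    case 1
    have "alg_iso (parity_table A B C D) t fB3 t"
      by (rule iso[where u = 1 and v = "1 / A"]) (use 1 D0 t in \<open>auto simp: parity_table_def fB3_def\<close>)
    then show ?thesis by blast
  next
    case 2
    have "alg_iso (parity_table A B C D) t (fB1 0) t"
      by (rule iso[where u = 1 and v = 1]) (use 2 D0 t in \<open>auto simp: parity_table_def fB1_def\<close>)
    then show ?thesis by blast
  next
    case 3
    have "alg_iso (parity_table A B C D) t (fB1 1) t"
      by (rule iso[where u = 1 and v = B]) (use 3 D0 t in \<open>auto simp: parity_table_def fB1_def\<close>)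
    then show ?thesis by blast
  next
    case 4
    have "alg_iso (parity_table A B C D) t fA2 t"
      by (rule iso[where u = 1 and v = C]) (use 4 D0 t in \<open>auto simp: parity_table_def fA2_def\<close>)
    then show ?thesis by blast
  qed
qed

theorem mainTheorem8:
  fixes f :: "int \<Rightarrow> int \<Rightarrow> 'k::field" and t :: int
  assumes "periodic2 f" and "is_leibniz f t"
  shows "(even t \<longrightarrow> (\<exists>\<alpha>\<in>{0,1}. alg_iso f t (fA1 \<alpha>) t) \<or> alg_iso f t fA2 t \<or> alg_iso f t fA3 t)
       \<and> (odd t \<longrightarrow> (\<exists>\<alpha>\<in>{0,1}. alg_iso f t (fB1 \<alpha>) t) \<or> alg_iso f t fA2 t \<or> alg_iso f t fB3 t)"
proof -
  obtain A B C D :: 'k where table: "f = parity_table A B C D"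
    using periodic2_parity_table[OF assms(1)] by blast
  show ?thesis
    using classify_even_t[of A B C D t] classify_odd_t[of A B C D t] assms(2)
    unfolding table by blast
qed

end
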